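(* Consider problem (VP) under the standing assumptions at $\bar x\in Q_0$. Let $\bar x$ be a local weak efficient solution of (VP) (in particular, a local efficient solution), let $u\in\mathcal{C}(\bar x)$, and suppose $L^2(Q;\bar x,u)\subset T^2(Q_0;\bar x,u)$. Then there is no $v\in X$ such that $f_i^{\circ}(\bar x,v)+f_i^{\circ\circ}(\bar x,u)<0$ for all $i\in I(\bar x;u)$ and $g_j^{\circ}(\bar x,v)+g_j^{\circ\circ}(\bar x,u)\leqq0$ for all $j\in J(\bar x;u)$.
   Context: Standing setting: $X$ is a Banach space; $I=\{1,\dots,p\}$, $J=\{1,\dots,m\}$; $f_i,g_j\colon X\to\mathbb{R}$; (VP) minimizes $f=(f_1,\dots,f_p)$ over $Q_0:=\{x\in X: g_j(x)\leqq 0,\ j\in J\}$. $J(\bar x):=\{j\in J: g_j(\bar x)=0\}$. Standing assumptions: $f_i$ ($i\in I$), $g_j$ ($j\in J(\bar x)$) locally Lipschitz at $\bar x$; $g_j$ ($j\notin J(\bar x)$) continuous at $\bar x$. $F^{\circ}(\bar x,u):=\limsup_{x\to\bar x,\,t\downarrow0}\frac{F(x+tu)-F(x)}{t}$; $F^{\circ\circ}(\bar x,u):=\limsup_{t\downarrow0}\frac{F(\bar x+tu)-F(\bar x)-tF^{\circ}(\bar x,u)}{\frac12t^2}$. $I(\bar x;u):=\{i\in I: f_i^{\circ}(\bar x,u)=0\}$, $J(\bar x;u):=\{j\in J(\bar x): g_j^{\circ}(\bar x,u)=0\}$. Lexicographic order on $\mathbb{R}^2$: $a\leqq_{\rm lex}b$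 iff $a_1<b_1$ or ($a_1=b_1$, $a_2\leqq b_2$). $F_i^2(\bar x;u,v):=(f_i^{\circ}(\bar x,u),\, f_i^{\circ}(\bar x,v)+f_i^{\circ\circ}(\bar x,u))$, $G_j^2(\bar x;u,v):=(g_j^{\circ}(\bar x,u),\, g_j^{\circ}(\bar x,v)+g_j^{\circ\circ}(\bar x,u))$. $Q:=Q_0\cap\{x: f_i(x)\leqq f_i(\bar x),\ i\in I\}$; $L^2(Q;\bar x,u):=\{v: F_i^2(\bar x;u,v)\leqq_{\rm lex}(0,0)\ \forall i\in I,\ G_j^2(\bar x;u,v)\leqq_{\rm lex}(0,0)\ \forall j\in J(\bar x)\}$. $T^2(\Omega;\bar x,u):=\{v: \exists t_k\downarrow0,\ \exists v^k\to v,\ \bar x+t_ku+\frac12t_k^2v^k\in\Omega\ \forall k\}$. Critical direction: $u$ with $f_i^{\circ}(\bar x,u)\leqq0$ for all $i$, $=0$ for some $i$, and $g_j^{\circ}(\bar x,u)\leqq0$ for all $j\in J(\bar x)$; $\mathcal{C}(\bar x)$ is the set of these. Local weak efficient solution: a neighborhood $U$ of $\bar x$ exists such that no $x\in U\cap Q_0$ has $f_i(x)<f_i(\bar x)$ for all $i\in I$. *)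

theory Defs
  imports "HOL-Analysis.Analysis" "HOL-Library.Extended_Real"
begin

definition clarke_dd :: "('a::real_normed_vector \<Rightarrow> real) \<Rightarrow> 'a \<Rightarrow> 'a \<Rightarrow> ereal" where
  "clarke_dd F xb u =
     Limsup (nhds xb \<times>\<^sub>F at_right 0) (\<lambda>(x, t). ereal ((F (x + t *\<^sub>R u) - F x) / t))"

definition clarke_dd2 :: "('a::real_normed_vector \<Rightarrow> real) \<Rightarrow> 'a \<Rightarrow> 'a \<Rightarrow> ereal" where
  "clarke_dd2 F xb u =
     Limsup (at_right 0)
       (\<lambda>t. (ereal (F (xb + t *\<^sub>R u) - F xb) - ereal t * clarke_dd F xb u) / ereal (t\<^sup>2 / 2))"

definition lex_le :: "ereal \<times> ereal \<Rightarrow> ereal \<times> ereal \<Rightarrow> bool" where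
  "lex_le a b \<longleftrightarrow> fst a < fst b \<or> (fst a = fst b \<and> snd a \<le> snd b)"

definition second_pair :: "('a::real_normed_vector \<Rightarrow> real) \<Rightarrow> 'a \<Rightarrow> 'a \<Rightarrow> 'a \<Rightarrow> ereal \<times> ereal" where
  "second_pair F xb u v = (clarke_dd F xb u, clarke_dd F xb v + clarke_dd2 F xb u)"

definition locally_lipschitz_at :: "('a::metric_space \<Rightarrow> real) \<Rightarrow> 'a \<Rightarrow> bool" where
  "locally_lipschitz_at F xb \<longleftrightarrow>
     (\<exists>L \<delta>. \<delta> > 0 \<and> (\<forall>y\<in>ball xb \<delta>. \<forall>z\<in>ball xb \<delta>. \<bar>F y - F z\<bar> \<le> L * dist y z))"

definition feasible_set :: "nat \<Rightarrow> (nat \<Rightarrow> 'a \<Rightarrow> real) \<Rightarrow> 'a set" where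
  "feasible_set m g = {x. \<forall>j\<in>{1..m}. g j x \<le> 0}"

definition active_set :: "nat \<Rightarrow> (nat \<Rightarrow> 'a \<Rightarrow> real) \<Rightarrow> 'a \<Rightarrow> nat set" where
  "active_set m g xb = {j\<in>{1..m}. g j xb = 0}"

definition level_set :: "nat \<Rightarrow> (nat \<Rightarrow> 'a \<Rightarrow> real) \<Rightarrow> nat \<Rightarrow> (nat \<Rightarrow> 'a \<Rightarrow> real) \<Rightarrow> 'a \<Rightarrow> 'a set" where
  "level_set p f m g xb = feasible_set m g \<inter> {x. \<forall>i\<in>{1..p}. f i x \<le> f i xb}"

definition I_u :: "nat \<Rightarrow> (nat \<Rightarrow> 'a::real_normed_vector \<Rightarrow> real) \<Rightarrow> 'a \<Rightarrow> 'a \<Rightarrow> nat set" where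
  "I_u p f xb u = {i\<in>{1..p}. clarke_dd (f i) xb u = 0}"

definition J_u :: "nat \<Rightarrow> (nat \<Rightarrow> 'a::real_normed_vector \<Rightarrow> real) \<Rightarrow> 'a \<Rightarrow> 'a \<Rightarrow> nat set" where
  "J_u m g xb u = {j\<in>active_set m g xb. clarke_dd (g j) xb u = 0}"

definition L2_set :: "nat \<Rightarrow> (nat \<Rightarrow> 'a::real_normed_vector \<Rightarrow> real) \<Rightarrow> nat \<Rightarrow> (nat \<Rightarrow> 'a \<Rightarrow> real) \<Rightarrow> 'a \<Rightarrow> 'a \<Rightarrow> 'a set" where
  "L2_set p f m g xb u =
     {v. (\<forall>i\<in>{1..p}. lex_le (second_pair (f i) xb u v) (0, 0)) \<and>
         (\<forall>j\<in>active_set m g xb. lex_le (second_pair (g j) xb u v) (0, 0))}"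

definition T2_set :: "'a::real_normed_vector set \<Rightarrow> 'a \<Rightarrow> 'a \<Rightarrow> 'a set" where
  "T2_set \<Omega> xb u =
     {v. \<exists>(t::nat \<Rightarrow> real) (w::nat \<Rightarrow> 'a). (\<forall>k. t k > 0) \<and> t \<longlonglongrightarrow> 0 \<and> w \<longlonglongrightarrow> v \<and>
          (\<forall>k. xb + t k *\<^sub>R u + ((1/2) * (t k)\<^sup>2) *\<^sub>R w k \<in> \<Omega>)}"

definition critical_dir :: "nat \<Rightarrow> (nat \<Rightarrow> 'a::real_normed_vector \<Rightarrow> real) \<Rightarrow> nat \<Rightarrow> (nat \<Rightarrow> 'a \<Rightarrow> real) \<Rightarrow> 'a \<Rightarrow> 'a \<Rightarrow> bool" where
  "critical_dir p f m g xb u \<longleftrightarrow>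
     (\<forall>i\<in>{1..p}. clarke_dd (f i) xb u \<le> 0) \<and> (\<exists>i\<in>{1..p}. clarke_dd (f i) xb u = 0) \<and>
     (\<forall>j\<in>active_set m g xb. clarke_dd (g j) xb u \<le> 0)"

definition local_weak_efficient :: "nat \<Rightarrow> (nat \<Rightarrow> 'a::topological_space \<Rightarrow> real) \<Rightarrow> nat \<Rightarrow> (nat \<Rightarrow> 'a \<Rightarrow> real) \<Rightarrow> 'a \<Rightarrow> bool" where
  "local_weak_efficient p f m g xb \<longleftrightarrow>
     (\<exists>U. open U \<and> xb \<in> U \<and> \<not> (\<exists>x\<in>U \<inter> feasible_set m g. \<forall>i\<in>{1..p}. f i x < f i xb))"

end

theory Submission
  imports Defs
begin

text \<open>Suppose such a \<open>v\<close> existed. By criticality of \<open>u\<close>, every pair \<open>F\<^sup>2(x\<^sub>0;u,v)\<close> and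
  \<open>G\<^sup>2(x\<^sub>0;u,v)\<close> is lexicographically nonpositive, so \<open>v\<close> is a second-order tangent direction to
  the feasible set: there are \<open>t\<^sub>k \<down> 0\<close> and \<open>w\<^sub>k \<rightarrow> v\<close> with
  \<open>x\<^sub>k = x\<^sub>0 + t\<^sub>k u + t\<^sub>k\<^sup>2/2 w\<^sub>k\<close> feasible. Along this parabola every objective eventually drops
  strictly below its value at \<open>x\<^sub>0\<close>: if \<open>f\<^sub>i\<degree>(x\<^sub>0,u) < 0\<close> this is a first-order effect, and if
  \<open>f\<^sub>i\<degree>(x\<^sub>0,u) = 0\<close> the second-order term \<open>t\<^sub>k\<^sup>2/2 (f\<^sub>i\<degree>(x\<^sub>0,v) + f\<^sub>i\<degree>\<degree>(x\<^sub>0,u))\<close> dominates;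
  in both cases the Lipschitz property absorbs the error from replacing \<open>w\<^sub>k\<close> by its limit.
  Since \<open>x\<^sub>k \<rightarrow> x\<^sub>0\<close>, this contradicts local weak efficiency.\<close>

lemma clarke_dd_less_imp_eventually:
  fixes F :: "'a::real_normed_vector \<Rightarrow> real"
  assumes "clarke_dd F xb d < ereal a" and "y \<longlonglongrightarrow> xb" and "s \<longlonglongrightarrow> 0" and "\<forall>k. s k > 0"
  shows "eventually (\<lambda>k. F (y k + s k *\<^sub>R d) - F (y k) < a * s k) sequentially"
proof -
  have ev: "eventually (\<lambda>(x, t). ereal ((F (x + t *\<^sub>R d) - F x) / t) < ereal a)
              (nhds xb \<times>\<^sub>F at_right 0)"
    using Limsup_lessD[OF assms(1)[unfolded clarke_dd_def]] by (simp only: case_prod_unfold)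
  have "filterlim (\<lambda>k. (y k, s k)) (nhds xb \<times>\<^sub>F at_right 0) sequentially"
    by (intro filterlim_Pair assms(2) tendsto_imp_filterlim_at_right assms(3)) (use assms(4) in auto)
  with ev have "eventually (\<lambda>k. (F (y k + s k *\<^sub>R d) - F (y k)) / s k < a) sequentially"
    by (auto simp: filterlim_iff)
  then show ?thesis
    by eventually_elim (use assms(4) in \<open>simp add: divide_less_eq mult.commute\<close>)
qed

lemma clarke_dd2_less_imp_eventually:
  fixes F :: "'a::real_normed_vector \<Rightarrow> real"
  assumes "clarke_dd2 F xb u < ereal b" and "clarke_dd F xb u = 0"
    and "t \<longlonglongrightarrow> 0" and "\<forall>k. t k > 0"
  shows "eventually (\<lambda>k. F (xb + t k *\<^sub>R u) - F xb < b * ((1/2) * (t k)\<^sup>2)) sequentially"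
proof -
  have ev: "eventually (\<lambda>t. (ereal (F (xb + t *\<^sub>R u) - F xb) - ereal t * clarke_dd F xb u)
              / ereal (t\<^sup>2 / 2) < ereal b) (at_right 0)"
    using Limsup_lessD[OF assms(1)[unfolded clarke_dd2_def]] by simp
  have "filterlim t (at_right 0) sequentially"
    by (intro tendsto_imp_filterlim_at_right assms(3)) (use assms(4) in auto)
  with ev have "eventually (\<lambda>k. (ereal (F (xb + t k *\<^sub>R u) - F xb) - ereal (t k) * clarke_dd F xb u)
                   / ereal ((t k)\<^sup>2 / 2) < ereal b) sequentially"
    by (auto simp: filterlim_iff)
  then show ?thesis
  proof eventually_elim
    case (elim k)
    have "t k > 0" using assms(4) by auto
    with elim assms(2) have "(F (xb + t k *\<^sub>R u) - F xb) / ((t k)\<^sup>2 / 2) < b" by simp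
    with \<open>t k > 0\<close> show ?case by (simp add: divide_less_eq mult.commute)
  qed
qed

lemma ereal_add_neg_imp_real_bounds:
  fixes a b :: ereal
  assumes "a + b < 0"
  obtains a' b' where "a < ereal a'" "b < ereal b'" "a' + b' < 0"
proof (cases a; cases b)
  fix x y assume "a = ereal x" "b = ereal y"
  with assms that[of "x - (x + y) / 4" "y - (x + y) / 4"] show thesis by simp
next
  fix x assume "a = ereal x" "b = -\<infinity>"
  with that[of "x + 1" "- x - 2"] show thesis by simp
next
  fix y assume "a = -\<infinity>" "b = ereal y"
  with that[of "- y - 2" "y + 1"] show thesis by simp
next
  assume "a = -\<infinity>" "b = -\<infinity>"
  with that[of "-1" "-1"] show thesis by simp
qed (use assms in auto)

lemma locally_lipschitz_at_eventually_le:
  assumes "locally_lipschitz_at F xb" and "y \<longlonglongrightarrow> xb" and "z \<longlonglongrightarrow> xb"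
  obtains L where "eventually (\<lambda>k. F (y k) - F (z k) \<le> L * dist (y k) (z k)) sequentially"
proof -
  obtain L \<delta> where "\<delta> > 0" and L: "\<forall>y\<in>ball xb \<delta>. \<forall>z\<in>ball xb \<delta>. \<bar>F y - F z\<bar> \<le> L * dist y z"
    using assms(1) unfolding locally_lipschitz_at_def by blast
  have "eventually (\<lambda>k. y k \<in> ball xb \<delta>) sequentially" "eventually (\<lambda>k. z k \<in> ball xb \<delta>) sequentially"
    using \<open>\<delta> > 0\<close> assms(2,3)[unfolded tendsto_iff] by (auto simp: dist_commute)
  then have "eventually (\<lambda>k. F (y k) - F (z k) \<le> L * dist (y k) (z k)) sequentially"
    by eventually_elim (use L in fastforce)
  then show thesis by (rule that)
qed

lemma eventually_less_along_parabola_first_order: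
  fixes F :: "'a::real_normed_vector \<Rightarrow> real"
  assumes lip: "locally_lipschitz_at F xb" and neg: "clarke_dd F xb u < 0"
    and t: "\<forall>k. t k > 0" "t \<longlonglongrightarrow> 0" and w: "w \<longlonglongrightarrow> v"
  shows "eventually (\<lambda>k. F (xb + t k *\<^sub>R u + ((1/2) * (t k)\<^sup>2) *\<^sub>R w k) < F xb) sequentially"
proof -
  obtain c where c: "clarke_dd F xb u < ereal c" "c < 0"
    using ereal_dense2[OF neg[unfolded zero_ereal_def]] by auto
  define y where "y k = xb + t k *\<^sub>R u" for k
  define e where "e k = (1/2) * t k * norm (w k)" for k
  have y: "y \<longlonglongrightarrow> xb" and yw: "(\<lambda>k. y k + ((1/2) * (t k)\<^sup>2) *\<^sub>R w k) \<longlonglongrightarrow> xb"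
    unfolding y_def using t w by (auto intro!: tendsto_eq_intros)
  obtain L where E1: "eventually (\<lambda>k. F (y k + ((1/2) * (t k)\<^sup>2) *\<^sub>R w k) - F (y k)
                                    \<le> L * dist (y k + ((1/2) * (t k)\<^sup>2) *\<^sub>R w k) (y k)) sequentially"
    using locally_lipschitz_at_eventually_le[OF lip yw y] .
  have E2: "eventually (\<lambda>k. F (y k) - F xb < c * t k) sequentially"
    unfolding y_def by (rule clarke_dd_less_imp_eventually[OF c(1) tendsto_const t(2) t(1)])
  have "(\<lambda>k. L * e k) \<longlonglongrightarrow> 0"
    unfolding e_def using w t by (auto intro!: tendsto_eq_intros)
  then have E3: "eventually (\<lambda>k. L * e k < - c) sequentially"
    using c(2) by (intro order_tendstoD(2)) auto
  from E1 E2 E3 have "eventually (\<lambda>k. F (y k + ((1/2) * (t k)\<^sup>2) *\<^sub>R w k) < F xb) sequentially"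
  proof eventually_elim
    case (elim k)
    have "dist (y k + ((1/2) * (t k)\<^sup>2) *\<^sub>R w k) (y k) = t k * e k"
      using t(1) by (simp add: dist_norm e_def power2_eq_square)
    moreover have "t k * (L * e k + c) < 0"
      using t(1) elim(3) by (intro mult_pos_neg) auto
    ultimately show ?case using elim(1,2) by (simp add: algebra_simps)
  qed
  then show ?thesis by (simp add: y_def)
qed

lemma eventually_less_along_parabola_second_order:
  fixes F :: "'a::real_normed_vector \<Rightarrow> real"
  assumes lip: "locally_lipschitz_at F xb" and zero: "clarke_dd F xb u = 0"
    and neg: "clarke_dd F xb v + clarke_dd2 F xb u < 0"
    and t: "\<forall>k. t k > 0" "t \<longlonglongrightarrow> 0" and w: "w \<longlonglongrightarrow> v"
  shows "eventually (\<lambda>k. F (xb + t k *\<^sub>R u + ((1/2) * (t k)\<^sup>2) *\<^sub>R w k) < F xb) sequentially"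
proof -
  obtain a b where ab: "clarke_dd F xb v < ereal a" "clarke_dd2 F xb u < ereal b" "a + b < 0"
    using ereal_add_neg_imp_real_bounds[OF neg] .
  define s where "s k = (1/2) * (t k)\<^sup>2" for k
  define y where "y k = xb + t k *\<^sub>R u" for k
  have "s k > 0" for k
    using t(1)[rule_format, of k] by (simp add: s_def)
  moreover have "s \<longlonglongrightarrow> 0"
    unfolding s_def using t by (auto intro!: tendsto_eq_intros)
  ultimately have s: "\<forall>k. s k > 0" "s \<longlonglongrightarrow> 0" by auto
  have y: "y \<longlonglongrightarrow> xb" and yw: "(\<lambda>k. y k + s k *\<^sub>R w k) \<longlonglongrightarrow> xb"
    and yv: "(\<lambda>k. y k + s k *\<^sub>R v) \<longlonglongrightarrow> xb"
    unfolding y_def using t s w by (auto intro!: tendsto_eq_intros)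
  obtain L where E1: "eventually (\<lambda>k. F (y k + s k *\<^sub>R w k) - F (y k + s k *\<^sub>R v)
                                    \<le> L * dist (y k + s k *\<^sub>R w k) (y k + s k *\<^sub>R v)) sequentially"
    using locally_lipschitz_at_eventually_le[OF lip yw yv] .
  \<comment> \<open>The base points \<open>y k\<close> move towards \<open>xb\<close>; this is why the Clarke limsup, which also
    varies the base point, is needed here.\<close>
  have E2: "eventually (\<lambda>k. F (y k + s k *\<^sub>R v) - F (y k) < a * s k) sequentially"
    by (rule clarke_dd_less_imp_eventually[OF ab(1) y s(2,1)])
  have E3: "eventually (\<lambda>k. F (y k) - F xb < b * s k) sequentially"
    using clarke_dd2_less_imp_eventually[OF ab(2) zero t(2,1)] by (simp add: y_def s_def)
  have "(\<lambda>k. L * norm (w k - v)) \<longlonglongrightarrow> 0"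
    using w by (auto intro!: tendsto_eq_intros simp: LIM_zero_iff)
  then have E4: "eventually (\<lambda>k. L * norm (w k - v) < - (a + b)) sequentially"
    using ab(3) by (intro order_tendstoD(2)) auto
  from E1 E2 E3 E4 have "eventually (\<lambda>k. F (y k + s k *\<^sub>R w k) < F xb) sequentially"
  proof eventually_elim
    case (elim k)
    have "dist (y k + s k *\<^sub>R w k) (y k + s k *\<^sub>R v) = s k * norm (w k - v)"
      using s(1)[rule_format, of k] by (simp add: dist_norm scaleR_diff_right[symmetric])
    moreover have "s k * (L * norm (w k - v) + (a + b)) < 0"
      using s(1) elim(4) by (intro mult_pos_neg) auto
    ultimately show ?case using elim(1-3) by (simp add: algebra_simps)
  qed
  then show ?thesis by (simp add: y_def s_def)
qed

lemma eventually_less_along_parabola: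
  fixes F :: "'a::real_normed_vector \<Rightarrow> real"
  assumes lip: "locally_lipschitz_at F xb" and nonpos: "clarke_dd F xb u \<le> 0"
    and second: "clarke_dd F xb u = 0 \<Longrightarrow> clarke_dd F xb v + clarke_dd2 F xb u < 0"
    and t: "\<forall>k. t k > 0" "t \<longlonglongrightarrow> 0" and w: "w \<longlonglongrightarrow> v"
  shows "eventually (\<lambda>k. F (xb + t k *\<^sub>R u + ((1/2) * (t k)\<^sup>2) *\<^sub>R w k) < F xb) sequentially"
proof (cases "clarke_dd F xb u = 0")
  case True
  then show ?thesis
    using eventually_less_along_parabola_second_order[OF lip True second t w] by blast
next
  case False
  with nonpos have "clarke_dd F xb u < 0" by simp
  then show ?thesis
    by (rule eventually_less_along_parabola_first_order[OF lip _ t w])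
qed

lemma lex_le_second_pair_zero:
  assumes "clarke_dd F xb u \<le> 0"
    and "clarke_dd F xb u = 0 \<Longrightarrow> clarke_dd F xb v + clarke_dd2 F xb u \<le> 0"
  shows "lex_le (second_pair F xb u v) (0, 0)"
  using assms by (auto simp: lex_le_def second_pair_def order.order_iff_strict)

lemma local_weak_efficient_no_descent_sequence:
  assumes "local_weak_efficient p f m g xb" and "x \<longlonglongrightarrow> xb"
    and "\<forall>k. x k \<in> feasible_set m g"
    and "\<forall>i\<in>{1..p}. eventually (\<lambda>k. f i (x k) < f i xb) sequentially"
  shows False
proof -
  obtain U where "open U" "xb \<in> U" and U: "\<not> (\<exists>x\<in>U \<inter> feasible_set m g. \<forall>i\<in>{1..p}. f i x < f i xb)"
    using assms(1) unfolding local_weak_efficient_def by blast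
  have "eventually (\<lambda>k. x k \<in> U) sequentially"
    using assms(2) \<open>open U\<close> \<open>xb \<in> U\<close> by (rule topological_tendstoD)
  moreover have "eventually (\<lambda>k. \<forall>i\<in>{1..p}. f i (x k) < f i xb) sequentially"
    using assms(4) by (intro eventually_ball_finite) auto
  ultimately have "eventually (\<lambda>k. x k \<in> U \<and> (\<forall>i\<in>{1..p}. f i (x k) < f i xb)) sequentially"
    by (rule eventually_conj)
  then obtain k where "x k \<in> U" "\<forall>i\<in>{1..p}. f i (x k) < f i xb"
    unfolding eventually_sequentially by blast
  with assms(3) U show False by blast
qed

text \<open>Only the Lipschitz continuity of the objectives enters the argument: everything the
  constraints contribute is packaged into the hypothesis \<open>cq\<close>.\<close>

theorem corollary4p3:
  fixes p m :: nat
    and f g :: "nat \<Rightarrow> 'a::banach \<Rightarrow> real"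
    and xb u :: 'a
  assumes feas: "xb \<in> feasible_set m g"
    and lip_f: "\<forall>i\<in>{1..p}. locally_lipschitz_at (f i) xb"
    and lip_g: "\<forall>j\<in>active_set m g xb. locally_lipschitz_at (g j) xb"
    and cont_g: "\<forall>j\<in>{1..m} - active_set m g xb. isCont (g j) xb"
    and opt: "local_weak_efficient p f m g xb"
    and crit: "critical_dir p f m g xb u"
    and cq: "L2_set p f m g xb u \<subseteq> T2_set (feasible_set m g) xb u"
  shows "\<not> (\<exists>v. (\<forall>i\<in>I_u p f xb u. clarke_dd (f i) xb v + clarke_dd2 (f i) xb u < 0) \<and>
              (\<forall>j\<in>J_u m g xb u. clarke_dd (g j) xb v + clarke_dd2 (g j) xb u \<le> 0))"
proof
  assume "\<exists>v. (\<forall>i\<in>I_u p f xb u. clarke_dd (f i) xb v + clarke_dd2 (f i) xb u < 0) \<and>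
              (\<forall>j\<in>J_u m g xb u. clarke_dd (g j) xb v + clarke_dd2 (g j) xb u \<le> 0)"
  then obtain v where vI: "\<forall>i\<in>I_u p f xb u. clarke_dd (f i) xb v + clarke_dd2 (f i) xb u < 0"
    and vJ: "\<forall>j\<in>J_u m g xb u. clarke_dd (g j) xb v + clarke_dd2 (g j) xb u \<le> 0" by blast
  have "v \<in> L2_set p f m g xb u"
    using crit vI vJ unfolding L2_set_def critical_dir_def I_u_def J_u_def
    by (auto intro!: lex_le_second_pair_zero)
  with cq obtain t w where t: "\<forall>k. t k > 0" "t \<longlonglongrightarrow> 0" and w: "w \<longlonglongrightarrow> v"
    and feasible: "\<forall>k. xb + t k *\<^sub>R u + ((1/2) * (t k)\<^sup>2) *\<^sub>R w k \<in> feasible_set m g"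
    unfolding T2_set_def by blast
  have "(\<lambda>k. xb + t k *\<^sub>R u + ((1/2) * (t k)\<^sup>2) *\<^sub>R w k) \<longlonglongrightarrow> xb"
    using t w by (auto intro!: tendsto_eq_intros)
  moreover have "\<forall>i\<in>{1..p}. eventually (\<lambda>k. f i (xb + t k *\<^sub>R u + ((1/2) * (t k)\<^sup>2) *\<^sub>R w k) < f i xb)
                    sequentially"
    using crit vI lip_f unfolding critical_dir_def I_u_def
    by (blast intro: eventually_less_along_parabola[OF _ _ _ t w])
  ultimately show False
    using local_weak_efficient_no_descent_sequence[OF opt _ feasible] by blast
qed

end
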